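(* Let $k$ be sufficiently large, $r=2^k\ln 2-\frac{1+\ln 2}{2}-\epsilon_k$ with $\epsilon_k=\Theta_k(2^{-k/3})$, $M=\lceil rN\rceil$. Let $U$ be the set of variables removed by steps PR1–PR2 applied to $\Phi=\Phi_k(N,M)$. Then with probability $1-o(1)$ as $N\to\infty$, $|U|\le\exp(-k^3)N$.
   Context: $\Phi=\Phi_k(N,M)$ is the random $k$-CNF on $V=\{x_1,\dots,x_N\}$ with $M$ clauses, each of its $kM$ literals chosen independently and uniformly from $\{x_1,\neg x_1,\dots,x_N,\neg x_N\}$; $D_l$ is the number of occurrences of literal $l$. PR1: let $U$ be the set of variables $x$ with $\max\{|D_x-kr/2|,|D_{\neg x}-kr/2|\}>k^32^{k/2}$. PR2: while there is a clause at least three of whose literals have underlying variable in $U$, remove all such clauses from the formula and add to $U$ every variable $x$ such that in the reduced formula the degree of $x$ or of $\neg x$ differs from $kr/2$ by more than $k^32^{k/2}$. The set $U$ at termination is the set of removed variables. *)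

theory Defs
  imports "HOL-Probability.Probability" "HOL-Library.Landau_Symbols"
begin

text \<open>Variables are x_0,...,x_(N-1), represented by naturals < N.  A literal is a pair
  (x, s): s = True means the positive literal x, s = False means its negation.
  A k-CNF with M clauses is a map from positions (i, j), i < M (clause index),
  j < k (position within the clause), to literals.\<close>

type_synonym lit = "nat \<times> bool"
type_synonym cnf = "nat \<times> nat \<Rightarrow> lit"

definition lits :: "nat \<Rightarrow> lit set" where
  "lits N = {0..<N} \<times> UNIV"

definition formulas :: "nat \<Rightarrow> nat \<Rightarrow> nat \<Rightarrow> cnf set" where
  "formulas k N M = PiE ({0..<M} \<times> {0..<k}) (\<lambda>_. lits N)"

text \<open>The random formula Phi_k(N,M): all kM literals independent uniform.\<close>
definition random_formula :: "nat \<Rightarrow> nat \<Rightarrow> nat \<Rightarrow> cnf pmf" where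
  "random_formula k N M = pmf_of_set (formulas k N M)"

definition deg :: "nat \<Rightarrow> cnf \<Rightarrow> nat set \<Rightarrow> lit \<Rightarrow> nat" where
  "deg k \<Phi> C l = card {(i, j). i \<in> C \<and> j < k \<and> \<Phi> (i, j) = l}"

definition deviates :: "nat \<Rightarrow> real \<Rightarrow> cnf \<Rightarrow> nat set \<Rightarrow> nat \<Rightarrow> bool" where
  "deviates k r \<Phi> C x \<longleftrightarrow>
     max \<bar>real (deg k \<Phi> C (x, True)) - real k * r / 2\<bar>
         \<bar>real (deg k \<Phi> C (x, False)) - real k * r / 2\<bar>
       > real k ^ 3 * 2 powr (real k / 2)"

definition bad_vars :: "nat \<Rightarrow> real \<Rightarrow> nat \<Rightarrow> cnf \<Rightarrow> nat set \<Rightarrow> nat set" where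
  "bad_vars k r N \<Phi> C = {x \<in> {0..<N}. deviates k r \<Phi> C x}"

definition heavy :: "nat \<Rightarrow> cnf \<Rightarrow> nat set \<Rightarrow> nat set \<Rightarrow> nat set" where
  "heavy k \<Phi> U C = {i \<in> C. card {j. j < k \<and> fst (\<Phi> (i, j)) \<in> U} \<ge> 3}"

text \<open>One round of PR2, acting on (U, current set of clauses).\<close>
definition pr_step :: "nat \<Rightarrow> real \<Rightarrow> nat \<Rightarrow> cnf \<Rightarrow> nat set \<times> nat set \<Rightarrow> nat set \<times> nat set" where
  "pr_step k r N \<Phi> UC =
     (let U = fst UC; C = snd UC; B = heavy k \<Phi> U C in
      if B = {} then (U, C) else (U \<union> bad_vars k r N \<Phi> (C - B), C - B))"

text \<open>PR1 gives the initial U; PR2 is iterated until it stabilises.  Since U only grows,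
  the final U is the union over all iterates.\<close>
definition removed_vars :: "nat \<Rightarrow> real \<Rightarrow> nat \<Rightarrow> nat \<Rightarrow> cnf \<Rightarrow> nat set" where
  "removed_vars k r N M \<Phi> =
     (\<Union>n. fst ((pr_step k r N \<Phi> ^^ n) (bad_vars k r N \<Phi> {0..<M}, {0..<M})))"

end

theory Submission
  imports Defs "HOL-Real_Asymp.Real_Asymp"
begin

(* Fix k and write T = k^3 2^(k/2), m = kr/2 for the mean literal degree and
   delta = exp(-k^3).  If more than delta N variables are removed by PR1-PR2, then
   deterministically one of three "atypical" events holds:
     (up)   at least lambda ~ delta N/4 literals have degree > m + T/2,
     (down) at least lambda literals have degree < m - T/2,
     (dense) some set of sigma ~ delta N variables contains two positions of each
            of rho ~ delta N T/(8k) clauses.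
   Indeed, the variables whose initial degree is far (> T/2) from m are few, and
   every other removed variable lost more than T/2 occurrences to removed clauses,
   each of which has at least three positions on earlier removed variables
   (lemma removal_forces_dense_clauses).  The events (up) and (down) are bounded by
   an exponential-moment (Chernoff) bound plus a union bound over literal sets; the
   event (dense) by a union bound over the choice of variables, clauses and pairs of
   positions.  Each has probability at most exp(-delta N/4), so for fixed large k
   the probability tends to 1 as N grows; finally the numerical side conditions are
   checked to hold for all large k. *)

section \<open>Elementary inequalities\<close>

text \<open>One term of the exponential series bounds the whole series from below.\<close>
lemma pow_div_fact_le_exp:
  fixes x :: real assumes "0 \<le> x"
  shows "x ^ m / fact m \<le> exp x"
proof -
  have s: "(\<lambda>n. x^n /\<^sub>R fact n) sums exp x" by (rule exp_converges)
  have "(\<Sum>n\<in>{..<Suc m}. x^n /\<^sub>R fact n) \<le> exp x"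
    using sum_le_suminf[OF sums_summable[OF s], of "{..<Suc m}"] s assms
    by (simp add: sums_iff sum_nonneg)
  moreover have "x^m / fact m \<le> (\<Sum>n\<in>{..<Suc m}. x^n /\<^sub>R fact n)"
    using assms by (simp add: divide_inverse_commute sum_nonneg)
  ultimately show ?thesis by linarith
qed

lemma binomial_le_exp_ratio_pow:
  assumes "m > 0"
  shows "real (n choose m) \<le> (exp 1 * real n / real m) ^ m"
proof -
  have a: "real (n choose m) * fact m \<le> real n ^ m"
    using binomial_fact_pow[of n m] by (metis of_nat_fact of_nat_le_iff of_nat_mult of_nat_power)
  have b: "real m ^ m / fact m \<le> exp 1 ^ m"
    using pow_div_fact_le_exp[of "real m" m] by (simp add: exp_of_nat_mult[symmetric])
  have "real (n choose m) = real (n choose m) * fact m / fact m" by simp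
  also have "\<dots> \<le> real n ^ m / fact m" using a by (intro divide_right_mono) auto
  also have "\<dots> = (real n / real m) ^ m * (real m ^ m / fact m)"
    using assms by (simp add: power_divide)
  also have "\<dots> \<le> (real n / real m) ^ m * exp 1 ^ m"
    using b by (intro mult_left_mono) auto
  also have "\<dots> = (exp 1 * real n / real m) ^ m" by (simp add: power_mult_distrib[symmetric] mult.commute)
  finally show ?thesis .
qed

lemma exp_le_quadratic:
  fixes x :: real assumes "\<bar>x\<bar> \<le> 1"
  shows "exp x \<le> 1 + x + x\<^sup>2"
proof (cases "x \<ge> 0")
  case True thus ?thesis using exp_bound[of x] assms by auto
next
  case False
  define h where "h = -x"
  have h: "0 \<le> h" "h \<le> 1" using False assms by (auto simp: h_def)
  have e: "1 + h + h\<^sup>2/2 \<le> exp h" using exp_lower_Taylor_quadratic h by auto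
  have "(1 - h + h\<^sup>2) * (1 + h + h\<^sup>2/2) = 1 + h\<^sup>2/2 + h^3/2 + h^4/2"
    by (simp add: power2_eq_square power3_eq_cube power4_eq_xxxx field_simps)
  hence "(1 - h + h\<^sup>2) * (1 + h + h\<^sup>2/2) \<ge> 1" using h by simp
  hence "(1 - h + h\<^sup>2) * exp h \<ge> 1"
    using e h by (smt (verit) mult_left_mono zero_le_power2)
  hence "exp (-h) \<le> 1 - h + h\<^sup>2"
    by (simp add: exp_minus field_simps)
  thus ?thesis by (simp add: h_def)
qed

text \<open>Here \<open>\<mu>\<close> is the mean of a sum of
  \<open>lam\<close> literal degrees, which lies between \<open>lam m\<close> and \<open>lam (m + k)\<close>, and the
  exponential parameter \<open>h\<close> is tuned so that \<open>(m + k) h = T/4\<close>.\<close>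
lemma chernoff_exponent_upper_tail:
  fixes \<mu> lam m k h T :: real
  assumes "0 \<le> lam" "0 \<le> h" "h \<le> 1" "lam*m \<le> \<mu>" "\<mu> \<le> lam*(m+k)" "(m+k)*h = T/4" "k \<le> T/8" "0 \<le> m"
  shows "\<mu>*(exp h - 1) - h*(lam*(m + T/2)) \<le> -(lam*h*T/8)"
proof -
  have e1: "exp h - 1 \<le> h + h\<^sup>2" using exp_bound[of h] assms by simp
  have e0: "0 \<le> exp h - 1" using assms by simp
  have mu0: "0 \<le> \<mu>" using assms(4) mult_nonneg_nonneg[OF assms(1) assms(8)] by linarith
  have "\<mu>*(exp h - 1) \<le> lam*(m+k)*(h + h\<^sup>2)"
    using mult_mono[OF assms(5) e1 _ e0] mu0 assms by simp
  moreover have "lam*(m+k)*(h + h\<^sup>2) - h*(lam*(m + T/2)) = lam*h*(k + (m+k)*h - T/2)"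
    by (simp add: algebra_simps power2_eq_square)
  moreover have "lam*h*(k + (m+k)*h - T/2) \<le> lam*h*(-T/8)"
    using assms by (intro mult_left_mono) auto
  ultimately show ?thesis by simp
qed

lemma chernoff_exponent_lower_tail:
  fixes \<mu> lam m k h T :: real
  assumes "0 \<le> lam" "0 \<le> h" "h \<le> 1" "lam*m \<le> \<mu>" "(m+k)*h = T/4" "0 \<le> k" "0 \<le> m"
  shows "\<mu>*(exp (-h) - 1) - (-h)*(lam*(m - T/2)) \<le> -(lam*h*T/8)"
proof -
  have q: "-h + h\<^sup>2 \<le> 0"
    using mult_left_mono[of h 1 h] assms by (simp add: power2_eq_square)
  have mu0: "0 \<le> \<mu>" using assms(4) mult_nonneg_nonneg[OF assms(1) assms(7)] by linarith
  have "\<mu>*(exp (-h) - 1) \<le> \<mu>*(-h + h\<^sup>2)"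
    using exp_le_quadratic[of "-h"] assms mu0 by (intro mult_left_mono) auto
  also have "\<dots> \<le> (lam*m)*(-h + h\<^sup>2)" using q assms by (intro mult_right_mono_neg) auto
  also have "(lam*m)*(-h + h\<^sup>2) = lam*h*(m*h - T/2) - h*(lam*(m - T/2))"
    by (simp add: algebra_simps power2_eq_square)
  also have "lam*h*(m*h - T/2) \<le> lam*h*(-T/8)"
  proof (intro mult_left_mono)
    have "m*h \<le> (m+k)*h" "0 \<le> (m+k)*h" using assms by (auto intro: mult_right_mono)
    thus "m*h - T/2 \<le> -T/8" using assms(5) by linarith
  qed (use assms in auto)
  finally show ?thesis by simp
qed

section \<open>Counting bounds in the uniform model\<close>

lemma finite_lits[simp]: "finite (lits N)" by (simp add: lits_def)
lemma card_lits[simp]: "card (lits N) = 2 * N" by (simp add: lits_def card_cartesian_product)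

lemma finite_formulas[simp]: "finite (formulas k N M)"
  unfolding formulas_def by (intro finite_PiE) auto

lemma card_formulas: "card (formulas k N M) = (2 * N) ^ (k * M)"
  unfolding formulas_def by (simp add: card_PiE card_cartesian_product mult.commute)

text \<open>Probability generating function of the number of coordinates of a uniform
  element of \<open>A^I\<close> that fall into \<open>L \<subseteq> A\<close>: the coordinates are independent.\<close>
lemma sum_pow_card_hits_PiE:
  fixes z :: real
  assumes I: "finite I" and A: "finite A" and L: "L \<subseteq> A"
  shows "(\<Sum>f\<in>PiE I (\<lambda>_. A). z ^ card {p\<in>I. f p \<in> L})
         = (real (card A) - real (card L) + real (card L) * z) ^ card I"
proof -
  have hits: "z ^ card {p\<in>I. f p \<in> L} = (\<Prod>p\<in>I. if f p \<in> L then z else 1)" for f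
    using I by (simp add: prod.If_cases Collect_conj_eq Int_commute)
  have coord: "(\<Sum>a\<in>A. if a \<in> L then z else 1) = real (card A) - real (card L) + real (card L) * z"
  proof -
    have "(\<Sum>a\<in>A. if a \<in> L then z else 1) = real (card L) * z + real (card (A - L))"
      using A L by (simp add: sum.If_cases Int_absorb1 Diff_eq[symmetric] Int_commute)
    moreover have "real (card (A - L)) = real (card A) - real (card L)"
      using A L by (simp add: card_Diff_subset finite_subset card_mono of_nat_diff)
    ultimately show ?thesis by simp
  qed
  have "(\<Sum>f\<in>PiE I (\<lambda>_. A). z ^ card {p\<in>I. f p \<in> L})
       = (\<Sum>f\<in>PiE I (\<lambda>_. A). \<Prod>p\<in>I. if f p \<in> L then z else 1)"
    by (simp only: hits)
  also have "\<dots> = (\<Prod>p\<in>I. \<Sum>a\<in>A. if a \<in> L then z else 1)"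
    by (rule prod_sum_PiE[symmetric]) (use I A in auto)
  finally show ?thesis using coord by simp
qed

lemma card_le_chernoff:
  assumes N: "N > 0" and L: "L \<subseteq> lits N" and E: "E \<subseteq> formulas k N M"
    and h: "\<And>\<Phi>. \<Phi> \<in> E \<Longrightarrow> \<eta> * a \<le> \<eta> * real (card {p\<in>{0..<M}\<times>{0..<k}. \<Phi> p \<in> L})"
  shows "real (card E) \<le> real (card (formulas k N M)) *
           exp (real (k*M) * (real (card L) / real (2*N)) * (exp \<eta> - 1) - \<eta> * a)"
proof -
  define X where "X \<Phi> = card {p\<in>{0..<M}\<times>{0..<k}. \<Phi> p \<in> L}" for \<Phi>
  define p where "p = real (card L) / real (2*N)"
  have p01: "0 \<le> p" "p \<le> 1" using card_mono[OF _ L] N by (auto simp: p_def)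
  have "real (card E) * exp (\<eta> * a) = (\<Sum>\<Phi>\<in>E. exp (\<eta> * a))" by simp
  also have "\<dots> \<le> (\<Sum>\<Phi>\<in>E. exp \<eta> ^ X \<Phi>)"
    by (intro sum_mono) (use h in \<open>auto simp: X_def exp_of_nat_mult[symmetric] mult.commute\<close>)
  also have "\<dots> \<le> (\<Sum>\<Phi>\<in>formulas k N M. exp \<eta> ^ X \<Phi>)"
    by (intro sum_mono2) (use E in auto)
  also have "\<dots> = (real (2*N) - real (card L) + real (card L) * exp \<eta>) ^ (k * M)"
    using sum_pow_card_hits_PiE[OF _ _ L, of "{0..<M}\<times>{0..<k}" "exp \<eta>"]
    by (simp add: X_def formulas_def card_cartesian_product mult.commute)
  also have "real (2*N) - real (card L) + real (card L) * exp \<eta> = real (2*N) * (1 + p * (exp \<eta> - 1))"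
    using N by (simp add: p_def field_simps)
  also have "(real (2*N) * (1 + p * (exp \<eta> - 1))) ^ (k*M)
      = real (2*N) ^ (k*M) * (1 + p * (exp \<eta> - 1)) ^ (k*M)"
    by (simp add: power_mult_distrib)
  also have "\<dots> \<le> real (2*N) ^ (k*M) * exp (p * (exp \<eta> - 1)) ^ (k*M)"
  proof -
    have "p * (-1) \<le> p * (exp \<eta> - 1)" using p01 by (intro mult_left_mono) auto
    hence "0 \<le> 1 + p * (exp \<eta> - 1)" using p01 by simp
    hence "(1 + p * (exp \<eta> - 1)) ^ (k*M) \<le> exp (p * (exp \<eta> - 1)) ^ (k*M)"
      by (intro power_mono) (simp add: add.commute exp_ge_add_one_self)
    thus ?thesis by (intro mult_left_mono) auto
  qed
  also have "\<dots> = real (card (formulas k N M)) * exp (real (k*M) * p * (exp \<eta> - 1))"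
    by (simp add: card_formulas exp_of_nat_mult[symmetric] mult.assoc)
  finally show ?thesis by (simp add: p_def exp_diff field_simps)
qed

lemma card_le_union_chernoff:
  assumes N: "N > 0" and E: "E \<subseteq> formulas k N M"
    and hyp: "\<And>\<Phi>. \<Phi> \<in> E \<Longrightarrow> \<exists>L. L \<subseteq> lits N \<and> card L = lam \<and>
                 \<eta> * a \<le> \<eta> * real (card {p\<in>{0..<M}\<times>{0..<k}. \<Phi> p \<in> L})"
  shows "real (card E) \<le> real ((2*N) choose lam) * (real (card (formulas k N M)) *
           exp (real (k*M) * (real lam / real (2*N)) * (exp \<eta> - 1) - \<eta> * a))"
proof -
  define Ls where "Ls = {L. L \<subseteq> lits N \<and> card L = lam}"
  define EL where "EL L = {\<Phi>\<in>formulas k N M. \<eta> * a \<le> \<eta> * real (card {p\<in>{0..<M}\<times>{0..<k}. \<Phi> p \<in> L})}" for L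
  have finLs: "finite Ls" unfolding Ls_def by (rule finite_subset[of _ "Pow (lits N)"]) auto
  have cLs: "card Ls = (2*N) choose lam" unfolding Ls_def using n_subsets[of "lits N" lam] by simp
  have "E \<subseteq> (\<Union>L\<in>Ls. EL L)" using hyp E by (fastforce simp: Ls_def EL_def)
  hence "card E \<le> card (\<Union>L\<in>Ls. EL L)"
    by (intro card_mono) (auto simp: EL_def intro: finite_subset[of _ "formulas k N M"])
  also have "\<dots> \<le> (\<Sum>L\<in>Ls. card (EL L))" by (rule card_UN_le[OF finLs])
  finally have "real (card E) \<le> (\<Sum>L\<in>Ls. real (card (EL L)))"
    by (simp flip: of_nat_sum)
  also have "\<dots> \<le> (\<Sum>L\<in>Ls. real (card (formulas k N M)) *
           exp (real (k*M) * (real lam / real (2*N)) * (exp \<eta> - 1) - \<eta> * a))"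
  proof (rule sum_mono)
    fix L assume "L \<in> Ls"
    hence L: "L \<subseteq> lits N" "card L = lam" by (auto simp: Ls_def)
    show "real (card (EL L)) \<le> real (card (formulas k N M)) *
           exp (real (k*M) * (real lam / real (2*N)) * (exp \<eta> - 1) - \<eta> * a)"
      unfolding EL_def L(2)[symmetric] by (rule card_le_chernoff[OF N L(1)]) auto
  qed
  finally show ?thesis using cLs by simp
qed

lemma card_hits_eq_sum_deg:
  assumes "finite L"
  shows "card {p\<in>{0..<M}\<times>{0..<k}. \<Phi> p \<in> L} = (\<Sum>l\<in>L. deg k \<Phi> {0..<M} l)"
proof -
  have fin: "finite {(i, j). i \<in> {0..<M} \<and> j < k \<and> \<Phi> (i, j) = l}" for l
    by (rule finite_subset[of _ "{0..<M}\<times>{0..<k}"]) auto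
  have "{p\<in>{0..<M}\<times>{0..<k}. \<Phi> p \<in> L} = (\<Union>l\<in>L. {(i, j). i \<in> {0..<M} \<and> j < k \<and> \<Phi> (i, j) = l})"
    by auto
  also have "card \<dots> = (\<Sum>l\<in>L. card {(i, j). i \<in> {0..<M} \<and> j < k \<and> \<Phi> (i, j) = l})"
    by (rule card_UN_disjoint) (use assms fin in auto)
  finally show ?thesis by (simp add: deg_def)
qed

lemma card_many_high_degree:
  fixes c :: real
  assumes N: "N > 0" and eta: "\<eta> \<ge> 0"
  shows "real (card {\<Phi>\<in>formulas k N M. lam \<le> card {l\<in>lits N. real (deg k \<Phi> {0..<M} l) > c}})
    \<le> real ((2*N) choose lam) * (real (card (formulas k N M)) *
           exp (real (k*M) * (real lam / real (2*N)) * (exp \<eta> - 1) - \<eta> * (real lam * c)))"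
proof (rule card_le_union_chernoff[OF N])
  fix \<Phi> assume "\<Phi> \<in> {\<Phi>\<in>formulas k N M. lam \<le> card {l\<in>lits N. real (deg k \<Phi> {0..<M} l) > c}}"
  then obtain L where L: "L \<subseteq> {l\<in>lits N. real (deg k \<Phi> {0..<M} l) > c}" "card L = lam"
    and fL: "finite L" by (auto elim: obtain_subset_with_card_n)
  have "real lam * c = (\<Sum>l\<in>L. c)" using L(2) by simp
  also have "\<dots> \<le> (\<Sum>l\<in>L. real (deg k \<Phi> {0..<M} l))"
    by (intro sum_mono) (use L(1) in auto)
  also have "\<dots> = real (card {p\<in>{0..<M}\<times>{0..<k}. \<Phi> p \<in> L})"
    by (simp add: card_hits_eq_sum_deg[OF fL])
  finally show "\<exists>L. L \<subseteq> lits N \<and> card L = lam \<and>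
          \<eta> * (real lam * c) \<le> \<eta> * real (card {p\<in>{0..<M}\<times>{0..<k}. \<Phi> p \<in> L})"
    using L eta by (intro exI[of _ L]) (auto intro: mult_left_mono)
qed auto

lemma card_many_low_degree:
  fixes c :: real
  assumes N: "N > 0" and eta: "\<eta> \<le> 0"
  shows "real (card {\<Phi>\<in>formulas k N M. lam \<le> card {l\<in>lits N. real (deg k \<Phi> {0..<M} l) < c}})
    \<le> real ((2*N) choose lam) * (real (card (formulas k N M)) *
           exp (real (k*M) * (real lam / real (2*N)) * (exp \<eta> - 1) - \<eta> * (real lam * c)))"
proof (rule card_le_union_chernoff[OF N])
  fix \<Phi> assume "\<Phi> \<in> {\<Phi>\<in>formulas k N M. lam \<le> card {l\<in>lits N. real (deg k \<Phi> {0..<M} l) < c}}"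
  then obtain L where L: "L \<subseteq> {l\<in>lits N. real (deg k \<Phi> {0..<M} l) < c}" "card L = lam"
    and fL: "finite L" by (auto elim: obtain_subset_with_card_n)
  have "real (card {p\<in>{0..<M}\<times>{0..<k}. \<Phi> p \<in> L}) = (\<Sum>l\<in>L. real (deg k \<Phi> {0..<M} l))"
    by (simp add: card_hits_eq_sum_deg[OF fL])
  also have "\<dots> \<le> (\<Sum>l\<in>L. c)"
    by (intro sum_mono) (use L(1) in \<open>auto intro: less_imp_le\<close>)
  also have "\<dots> = real lam * c" using L(2) by simp
  finally show "\<exists>L. L \<subseteq> lits N \<and> card L = lam \<and>
          \<eta> * (real lam * c) \<le> \<eta> * real (card {p\<in>{0..<M}\<times>{0..<k}. \<Phi> p \<in> L})"
    using L eta by (intro exI[of _ L]) (auto intro: mult_left_mono_neg)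
qed auto

lemma card_positions_in_vars:
  assumes N: "N > 0" and P: "P \<subseteq> {0..<M}\<times>{0..<k}" and S: "S \<subseteq> {0..<N}"
  shows "real (card {\<Phi>\<in>formulas k N M. \<forall>p\<in>P. fst (\<Phi> p) \<in> S})
         = real (card (formulas k N M)) * (real (card S) / real N) ^ card P"
proof -
  define I where "I = {0..<M}\<times>{0..<k}"
  have fI: "finite I" by (simp add: I_def)
  have fP: "finite P" by (rule finite_subset[OF P]) simp
  have "card P \<le> card I" using P by (intro card_mono) (auto simp: I_def)
  hence PI: "I \<inter> P = P" "card I = card P + card (I - P)"
    using P fP by (auto simp: I_def card_Diff_subset)
  have SL: "fst l \<in> S \<Longrightarrow> l \<in> lits N" for l using S by (auto simp: lits_def mem_Times_iff)
  have "(\<forall>p\<in>I. \<Phi> p \<in> (if p \<in> P then S \<times> UNIV else lits N))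
      \<longleftrightarrow> (\<forall>p\<in>I. \<Phi> p \<in> lits N) \<and> (\<forall>p\<in>P. fst (\<Phi> p) \<in> S)" for \<Phi>
  proof (intro iffI conjI ballI)
    fix p assume h: "\<forall>p\<in>I. \<Phi> p \<in> (if p \<in> P then S \<times> UNIV else lits N)"
    { assume "p \<in> I" thus "\<Phi> p \<in> lits N"
        using h SL[of "\<Phi> p"] by (cases "p \<in> P") (auto simp: mem_Times_iff) }
    { assume "p \<in> P"
      moreover have "p \<in> I" using P \<open>p \<in> P\<close> by (auto simp: I_def)
      ultimately show "fst (\<Phi> p) \<in> S" using h by (force simp: mem_Times_iff) }
  next
    fix p assume "(\<forall>p\<in>I. \<Phi> p \<in> lits N) \<and> (\<forall>p\<in>P. fst (\<Phi> p) \<in> S)" "p \<in> I"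
    thus "\<Phi> p \<in> (if p \<in> P then S \<times> UNIV else lits N)" by (simp add: mem_Times_iff)
  qed
  hence "{\<Phi>\<in>formulas k N M. \<forall>p\<in>P. fst (\<Phi> p) \<in> S} = PiE I (\<lambda>p. if p \<in> P then S \<times> UNIV else lits N)"
    by (intro set_eqI) (simp add: formulas_def I_def[symmetric] PiE_iff conj_ac)
  hence "card {\<Phi>\<in>formulas k N M. \<forall>p\<in>P. fst (\<Phi> p) \<in> S}
      = (\<Prod>p\<in>I. card (if p \<in> P then S \<times> (UNIV :: bool set) else lits N))"
    using fI by (simp add: card_PiE)
  also have "\<dots> = (\<Prod>p\<in>I. if p \<in> P then 2 * card S else 2 * N)"
    by (intro prod.cong refl) (simp add: card_cartesian_product)
  also have "\<dots> = (2 * card S) ^ card P * (2 * N) ^ card (I - P)"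
    using fI PI by (simp add: prod.If_cases Diff_eq)
  finally have c: "real (card {\<Phi>\<in>formulas k N M. \<forall>p\<in>P. fst (\<Phi> p) \<in> S})
      = real (2 * card S) ^ card P * real (2 * N) ^ card (I - P)" by simp
  have "real (card (formulas k N M)) = real (2*N) ^ card P * real (2*N) ^ card (I - P)"
    using PI by (simp add: card_formulas I_def card_cartesian_product mult.commute power_add)
  thus ?thesis using N unfolding c by (simp add: power_divide field_simps power_mult_distrib)
qed

definition dense_formulas :: "nat \<Rightarrow> nat \<Rightarrow> nat \<Rightarrow> nat \<Rightarrow> nat \<Rightarrow> cnf set" where
  "dense_formulas k N M \<sigma> \<rho> = {\<Phi>\<in>formulas k N M. \<exists>S. S \<subseteq> {0..<N} \<and> card S = \<sigma> \<and>
      (\<exists>R. R \<subseteq> {0..<M} \<and> card R = \<rho> \<and> (\<forall>i\<in>R. 2 \<le> card {j. j < k \<and> fst (\<Phi> (i,j)) \<in> S}))}"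

text \<open>The dense event is monotone: more variables or fewer clauses only help.\<close>
lemma dense_formulasI:
  assumes \<Phi>: "\<Phi> \<in> formulas k N M" and S: "S \<subseteq> {0..<N}" "card S \<le> \<sigma>" "\<sigma> \<le> N"
    and R: "R \<subseteq> {0..<M}" "\<rho> \<le> card R" and two: "\<forall>i\<in>R. 2 \<le> card {j. j < k \<and> fst (\<Phi> (i,j)) \<in> S}"
  shows "\<Phi> \<in> dense_formulas k N M \<sigma> \<rho>"
proof -
  obtain S' where S': "S \<subseteq> S'" "S' \<subseteq> {0..<N}" "card S' = \<sigma>"
    using exists_subset_between[of S \<sigma> "{0..<N}"] S by auto
  obtain R' where R': "R' \<subseteq> R" "card R' = \<rho>"
    using obtain_subset_with_card_n[OF R(2)] by metis
  have "2 \<le> card {j. j < k \<and> fst (\<Phi> (i,j)) \<in> S'}" if "i \<in> R'" for i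
  proof -
    have "2 \<le> card {j. j < k \<and> fst (\<Phi> (i,j)) \<in> S}" using two R'(1) that by blast
    also have "\<dots> \<le> card {j. j < k \<and> fst (\<Phi> (i,j)) \<in> S'}" using S'(1) by (intro card_mono) auto
    finally show ?thesis .
  qed
  thus ?thesis unfolding dense_formulas_def using \<Phi> S' R' R(1) by blast
qed

definition position_pairs :: "nat \<Rightarrow> (nat \<times> nat) set" where
  "position_pairs k = {p. fst p < k \<and> snd p < k \<and> fst p \<noteq> snd p}"

definition chosen_positions :: "nat set \<Rightarrow> (nat \<Rightarrow> nat \<times> nat) \<Rightarrow> (nat \<times> nat) set" where
  "chosen_positions R J = (\<lambda>i. (i, fst (J i))) ` R \<union> (\<lambda>i. (i, snd (J i))) ` R"

lemma finite_position_pairs: "finite (position_pairs k)"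
  by (rule finite_subset[of _ "{0..<k}\<times>{0..<k}"]) (auto simp: position_pairs_def)

lemma card_position_pairs: "card (position_pairs k) \<le> k * k"
proof -
  have "position_pairs k \<subseteq> {0..<k}\<times>{0..<k}" by (auto simp: position_pairs_def)
  thus ?thesis using card_mono[of "{0..<k}\<times>{0..<k}"] by (simp add: card_cartesian_product)
qed

lemma card_chosen_positions:
  assumes "finite R" "J \<in> PiE R (\<lambda>_. position_pairs k)"
  shows "card (chosen_positions R J) = 2 * card R"
proof -
  have "(\<lambda>i. (i, fst (J i))) ` R \<inter> (\<lambda>i. (i, snd (J i))) ` R = {}"
    using assms(2) by (auto simp: position_pairs_def PiE_iff)
  moreover have "inj_on (\<lambda>i. (i, fst (J i))) R" "inj_on (\<lambda>i. (i, snd (J i))) R"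
    by (auto simp: inj_on_def)
  ultimately show ?thesis
    using assms(1) by (simp add: chosen_positions_def card_Un_disjoint card_image)
qed

definition pairs_in_vars :: "nat \<Rightarrow> nat \<Rightarrow> nat \<Rightarrow> nat set \<Rightarrow> nat set \<Rightarrow> (nat \<Rightarrow> nat \<times> nat) \<Rightarrow> cnf set" where
  "pairs_in_vars k N M S R J = {\<Phi>\<in>formulas k N M. \<forall>p\<in>chosen_positions R J. fst (\<Phi> p) \<in> S}"

lemma dense_formulas_cover:
  "dense_formulas k N M \<sigma> \<rho> \<subseteq> (\<Union>S\<in>{S. S \<subseteq> {0..<N} \<and> card S = \<sigma>}. \<Union>R\<in>{R. R \<subseteq> {0..<M} \<and> card R = \<rho>}.
     \<Union>J\<in>PiE R (\<lambda>_. position_pairs k). pairs_in_vars k N M S R J)"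
proof
  fix \<Phi> assume "\<Phi> \<in> dense_formulas k N M \<sigma> \<rho>"
  then obtain S R where \<Phi>: "\<Phi> \<in> formulas k N M" and S: "S \<subseteq> {0..<N}" "card S = \<sigma>"
    and R: "R \<subseteq> {0..<M}" "card R = \<rho>" and two: "\<forall>i\<in>R. 2 \<le> card {j. j < k \<and> fst (\<Phi> (i,j)) \<in> S}"
    unfolding dense_formulas_def by blast
  have "\<forall>i\<in>R. \<exists>p\<in>position_pairs k. fst (\<Phi> (i, fst p)) \<in> S \<and> fst (\<Phi> (i, snd p)) \<in> S"
  proof
    fix i assume "i \<in> R"
    then obtain T where "T \<subseteq> {j. j < k \<and> fst (\<Phi> (i,j)) \<in> S}" "card T = 2"
      using two by (meson obtain_subset_with_card_n)
    then obtain a b where "a \<noteq> b" "a < k" "b < k" "fst (\<Phi> (i,a)) \<in> S" "fst (\<Phi> (i,b)) \<in> S"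
      by (auto simp: card_2_iff)
    thus "\<exists>p\<in>position_pairs k. fst (\<Phi> (i, fst p)) \<in> S \<and> fst (\<Phi> (i, snd p)) \<in> S"
      by (intro bexI[of _ "(a,b)"]) (auto simp: position_pairs_def)
  qed
  then obtain J where "J \<in> PiE R (\<lambda>_. position_pairs k)"
      "\<forall>i\<in>R. fst (\<Phi> (i, fst (J i))) \<in> S \<and> fst (\<Phi> (i, snd (J i))) \<in> S"
    unfolding PiE_choice by blast
  thus "\<Phi> \<in> (\<Union>S\<in>{S. S \<subseteq> {0..<N} \<and> card S = \<sigma>}. \<Union>R\<in>{R. R \<subseteq> {0..<M} \<and> card R = \<rho>}.
     \<Union>J\<in>PiE R (\<lambda>_. position_pairs k). pairs_in_vars k N M S R J)"
    using \<Phi> S R unfolding pairs_in_vars_def chosen_positions_def by blast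
qed

lemma card_pairs_in_vars:
  assumes N: "N > 0" and S: "S \<subseteq> {0..<N}" and R: "R \<subseteq> {0..<M}"
    and J: "J \<in> PiE R (\<lambda>_. position_pairs k)"
  shows "real (card (pairs_in_vars k N M S R J))
           = real (card (formulas k N M)) * (real (card S) / real N) ^ (2 * card R)"
proof -
  have "chosen_positions R J \<subseteq> {0..<M}\<times>{0..<k}"
    using R J by (auto simp: chosen_positions_def position_pairs_def PiE_iff)
  thus ?thesis
    using card_positions_in_vars[OF N _ S] card_chosen_positions[OF _ J] R
    by (simp add: pairs_in_vars_def finite_subset)
qed

lemma card_pair_choices:
  assumes "finite R" shows "real (card (PiE R (\<lambda>_. position_pairs k))) \<le> real (k*k) ^ card R"
proof -
  have "card (PiE R (\<lambda>_. position_pairs k)) \<le> (k*k) ^ card R"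
    using power_mono[OF card_position_pairs[of k], of "card R"] assms by (simp add: card_PiE)
  thus ?thesis by (metis of_nat_le_iff of_nat_power)
qed

lemma card_UN_le_real:
  assumes "finite X" "\<And>x. x \<in> X \<Longrightarrow> real (card (A x)) \<le> b"
  shows "real (card (\<Union>x\<in>X. A x)) \<le> real (card X) * b"
proof -
  have "real (card (\<Union>x\<in>X. A x)) \<le> (\<Sum>x\<in>X. real (card (A x)))"
    using card_UN_le[OF assms(1), of A] by (simp flip: of_nat_sum)
  also have "\<dots> \<le> (\<Sum>x\<in>X. b)" by (intro sum_mono assms(2))
  finally show ?thesis by simp
qed

lemma card_dense_formulas:
  assumes N: "N > 0"
  shows "real (card (dense_formulas k N M \<sigma> \<rho>)) \<le> real (N choose \<sigma>) * (real (M choose \<rho>) *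
     (real (k*k) ^ \<rho> * (real (card (formulas k N M)) * (real \<sigma> / real N) ^ (2*\<rho>))))"
proof -
  define B where "B = real (card (formulas k N M)) * (real \<sigma> / real N) ^ (2*\<rho>)"
  define subsets where "subsets n c = {S. S \<subseteq> {0..<n} \<and> card S = c}" for n c :: nat
  have fin_subsets: "finite (subsets n c)" for n c
    unfolding subsets_def by (rule finite_subset[of _ "Pow {0..<n}"]) auto
  have card_subsets: "card (subsets n c) = n choose c" for n c
    using n_subsets[of "{0..<n}" c] by (simp add: subsets_def)
  have per_clauses: "real (card (\<Union>J\<in>PiE R (\<lambda>_. position_pairs k). pairs_in_vars k N M S R J))
      \<le> real (k*k) ^ \<rho> * B" if S: "S \<in> subsets N \<sigma>" and R: "R \<in> subsets M \<rho>" for S R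
  proof -
    have fR: "finite R" using R by (auto simp: subsets_def intro: finite_subset)
    have "real (card (\<Union>J\<in>PiE R (\<lambda>_. position_pairs k). pairs_in_vars k N M S R J))
        \<le> real (card (PiE R (\<lambda>_. position_pairs k))) * B"
      using S R card_pairs_in_vars[OF N] fR
      by (intro card_UN_le_real finite_PiE finite_position_pairs) (auto simp: subsets_def B_def)
    also have "\<dots> \<le> real (k*k) ^ \<rho> * B"
      using card_pair_choices[OF fR] R by (intro mult_right_mono) (auto simp: subsets_def B_def)
    finally show ?thesis .
  qed
  have "real (card (dense_formulas k N M \<sigma> \<rho>)) \<le> real (card (\<Union>S\<in>subsets N \<sigma>. \<Union>R\<in>subsets M \<rho>.
      \<Union>J\<in>PiE R (\<lambda>_. position_pairs k). pairs_in_vars k N M S R J))"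
    unfolding subsets_def
    by (intro of_nat_mono card_mono dense_formulas_cover)
      (rule finite_subset[of _ "formulas k N M"], auto simp: pairs_in_vars_def)
  also have "\<dots> \<le> real (card (subsets N \<sigma>)) * (real (card (subsets M \<rho>)) * (real (k*k) ^ \<rho> * B))"
    using per_clauses by (intro card_UN_le_real fin_subsets) auto
  finally show ?thesis by (simp add: card_subsets B_def)
qed

section \<open>The peeling process PR1--PR2\<close>

definition peel_state :: "nat \<Rightarrow> real \<Rightarrow> nat \<Rightarrow> nat \<Rightarrow> cnf \<Rightarrow> nat \<Rightarrow> nat set \<times> nat set" where
  "peel_state k r N M \<Phi> t = (pr_step k r N \<Phi> ^^ t) (bad_vars k r N \<Phi> {0..<M}, {0..<M})"

context
  fixes k :: nat and r :: real and N M :: nat and \<Phi> :: cnf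
begin

abbreviation "removed_by t \<equiv> fst (peel_state k r N M \<Phi> t)"
abbreviation "kept_clauses t \<equiv> snd (peel_state k r N M \<Phi> t)"

lemma peel_state_0: "peel_state k r N M \<Phi> 0 = (bad_vars k r N \<Phi> {0..<M}, {0..<M})"
  by (simp add: peel_state_def)

lemma peel_state_Suc: "peel_state k r N M \<Phi> (Suc t) = pr_step k r N \<Phi> (peel_state k r N M \<Phi> t)"
  by (simp add: peel_state_def)

lemma removed_vars_eq_UN: "removed_vars k r N M \<Phi> = (\<Union>t. removed_by t)"
  by (simp add: removed_vars_def peel_state_def)

lemma removed_by_Suc: "removed_by t \<subseteq> removed_by (Suc t)"
  by (auto simp: peel_state_Suc pr_step_def Let_def)

lemma kept_clauses_antimono: "t \<le> t' \<Longrightarrow> kept_clauses t' \<subseteq> kept_clauses t"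
  by (rule lift_Suc_antimono_le[of kept_clauses]) (auto simp: peel_state_Suc pr_step_def Let_def)

lemma kept_clauses_subset: "kept_clauses t \<subseteq> {0..<M}"
  using kept_clauses_antimono[of 0 t] by (simp add: peel_state_0)

lemma removed_by_subset: "removed_by t \<subseteq> {0..<N}"
  by (induction t) (auto simp: peel_state_0 peel_state_Suc pr_step_def Let_def bad_vars_def)

lemma finite_removed_by: "finite (removed_by t)"
  using finite_subset[OF removed_by_subset] by simp

lemma removed_by_deviates: "x \<in> removed_by t \<Longrightarrow> \<exists>t'\<le>t. x \<in> bad_vars k r N \<Phi> (kept_clauses t')"
proof (induction t)
  case 0 thus ?case by (auto simp: peel_state_0)
next
  case (Suc t)
  show ?case
  proof (cases "x \<in> removed_by t")
    case True thus ?thesis using Suc.IH le_SucI by blast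
  next
    case False
    hence "x \<in> bad_vars k r N \<Phi> (kept_clauses (Suc t))"
      using Suc.prems by (auto simp: peel_state_Suc pr_step_def Let_def split: if_splits)
    thus ?thesis by blast
  qed
qed

lemma dropped_clause_heavy:
  "i \<in> {0..<M} \<Longrightarrow> i \<notin> kept_clauses (Suc t) \<Longrightarrow> 3 \<le> card {j. j < k \<and> fst (\<Phi> (i, j)) \<in> removed_by t}"
proof (induction t)
  case 0
  thus ?case by (auto simp: peel_state_Suc peel_state_0 pr_step_def Let_def heavy_def split: if_splits)
next
  case (Suc t)
  show ?case
  proof (cases "i \<in> kept_clauses (Suc t)")
    case True
    thus ?thesis using Suc.prems
      by (auto simp: peel_state_Suc[of "Suc t"] pr_step_def Let_def heavy_def split: if_splits)
  next
    case False
    hence "3 \<le> card {j. j < k \<and> fst (\<Phi> (i, j)) \<in> removed_by t}" using Suc.IH Suc.prems by blast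
    also have "\<dots> \<le> card {j. j < k \<and> fst (\<Phi> (i, j)) \<in> removed_by (Suc t)}"
      using removed_by_Suc by (intro card_mono) auto
    finally show ?thesis .
  qed
qed

end

lemma finite_subset_incseq_UN:
  assumes "finite A" "A \<subseteq> (\<Union>t. B t)" and inc: "\<And>t. B t \<subseteq> B (Suc t)"
  shows "\<exists>n. A \<subseteq> B n"
  using assms(1,2)
proof (induction A rule: finite_induct)
  case empty thus ?case by auto
next
  case (insert x A)
  then obtain n t where "A \<subseteq> B n" "x \<in> B t" by auto
  moreover have "B n \<subseteq> B (max n t)" "B t \<subseteq> B (max n t)"
    using lift_Suc_mono_le[of B, OF inc] by auto
  ultimately show ?case by blast
qed

lemma first_crossing_subset:
  assumes inc: "\<And>t. A t \<subseteq> A (Suc t)" and fin: "\<And>t. finite (A t)"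
    and A0: "A 0 = {}" and n: "s \<le> card (A n)"
  shows "\<exists>t S. A t \<subseteq> S \<and> S \<subseteq> A (Suc t) \<and> card S = s"
proof -
  have ex: "\<exists>t. s \<le> card (A (Suc t))"
    using n card_mono[OF fin inc, of n] by (auto intro: le_trans)
  define t where "t = (LEAST t. s \<le> card (A (Suc t)))"
  have t: "s \<le> card (A (Suc t))" unfolding t_def using ex by (rule LeastI_ex)
  have "card (A t) \<le> s"
  proof (cases t)
    case (Suc t')
    hence "\<not> s \<le> card (A (Suc t'))" using not_less_Least[of t' "\<lambda>t. s \<le> card (A (Suc t))"] t_def by auto
    thus ?thesis using Suc by simp
  qed (simp add: A0)
  thus ?thesis using exists_subset_between[OF _ t inc fin] by blast
qed

definition far_vars :: "nat \<Rightarrow> real \<Rightarrow> nat \<Rightarrow> nat \<Rightarrow> cnf \<Rightarrow> real \<Rightarrow> nat set" where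
  "far_vars k r N M \<Phi> T = {x\<in>{0..<N}. \<exists>b. \<bar>real (deg k \<Phi> {0..<M} (x,b)) - real k * r / 2\<bar> > T / 2}"

lemma finite_far_vars: "finite (far_vars k r N M \<Phi> T)"
  by (rule finite_subset[of _ "{0..<N}"]) (auto simp: far_vars_def)

lemma initially_removed_far:
  assumes T: "T = real k ^ 3 * 2 powr (real k / 2)"
  shows "bad_vars k r N \<Phi> {0..<M} \<subseteq> far_vars k r N M \<Phi> T"
proof
  fix x assume "x \<in> bad_vars k r N \<Phi> {0..<M}"
  hence "x < N" "\<exists>b. \<bar>real (deg k \<Phi> {0..<M} (x,b)) - real k * r / 2\<bar> > T"
    unfolding bad_vars_def deviates_def T less_max_iff_disj by auto
  then obtain b where "x < N" "\<bar>real (deg k \<Phi> {0..<M} (x,b)) - real k * r / 2\<bar> > T" by blast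
  moreover have "T \<ge> 0" using T by simp
  ultimately have "x < N" "\<bar>real (deg k \<Phi> {0..<M} (x,b)) - real k * r / 2\<bar> > T / 2" by linarith+
  thus "x \<in> far_vars k r N M \<Phi> T" unfolding far_vars_def by auto
qed

lemma near_deviating_var_occurs_outside:
  fixes T :: real
  assumes T: "T = real k ^ 3 * 2 powr (real k / 2)"
    and C': "C' \<subseteq> {0..<M}" and C: "C \<subseteq> C'"
    and dev: "deviates k r \<Phi> C' x" and near: "x \<in> {0..<N} - far_vars k r N M \<Phi> T"
  shows "T / 2 < real (card {(i,j). i \<in> {0..<M} - C \<and> j < k \<and> fst (\<Phi> (i,j)) = x})"
proof -
  define m where "m = real k * r / 2"
  obtain b where b: "\<bar>real (deg k \<Phi> C' (x,b)) - m\<bar> > T"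
    using dev unfolding deviates_def T m_def less_max_iff_disj by blast
  define A where "A = {(i,j). i \<in> {0..<M} \<and> j < k \<and> \<Phi> (i,j) = (x,b)}"
  define A1 where "A1 = {(i,j). i \<in> C' \<and> j < k \<and> \<Phi> (i,j) = (x,b)}"
  define A2 where "A2 = {(i,j). i \<in> {0..<M} - C' \<and> j < k \<and> \<Phi> (i,j) = (x,b)}"
  define Out where "Out = {(i,j). i \<in> {0..<M} - C \<and> j < k \<and> fst (\<Phi> (i,j)) = x}"
  have fin: "finite X" if "X \<subseteq> {0..<M} \<times> {0..<k}" for X
    by (rule finite_subset[OF that]) simp
  have fA: "finite A" "finite A1" "finite A2" "finite Out"
    using C' by (auto simp: A_def A1_def A2_def Out_def intro!: fin)
  have "card A \<le> card A1 + card A2"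
    using fA card_Un_le[of A1 A2] card_mono[of "A1 \<union> A2" A] by (force simp: A_def A1_def A2_def)
  moreover have "card A1 \<le> card A" using C' fA by (intro card_mono) (auto simp: A_def A1_def)
  moreover have "card A2 \<le> card Out" using C fA by (intro card_mono) (auto simp: A2_def Out_def)
  moreover have "deg k \<Phi> C' (x,b) = card A1" "deg k \<Phi> {0..<M} (x,b) = card A"
    by (simp_all add: deg_def A_def A1_def)
  moreover have "\<bar>real (deg k \<Phi> {0..<M} (x,b)) - m\<bar> \<le> T / 2"
    using near by (force simp: far_vars_def m_def not_less)
  ultimately show ?thesis using b unfolding Out_def[symmetric] by (auto simp: abs_if split: if_splits)
qed

lemma card_positions_on_vars:
  fixes k :: nat and \<Phi> :: cnf
  assumes "finite R" "finite S"
  shows "(\<Sum>x\<in>S. card {(i,j). i \<in> R \<and> j < k \<and> fst (\<Phi> (i,j)) = x})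
        = card {(i,j). i \<in> R \<and> j < k \<and> fst (\<Phi> (i,j)) \<in> S}"
proof -
  have fin: "finite {(i,j). i \<in> R \<and> j < k \<and> fst (\<Phi> (i,j)) = x}" for x
    by (rule finite_subset[of _ "R \<times> {0..<k}"]) (use assms in auto)
  have "{(i,j). i \<in> R \<and> j < k \<and> fst (\<Phi> (i,j)) \<in> S}
      = (\<Union>x\<in>S. {(i,j). i \<in> R \<and> j < k \<and> fst (\<Phi> (i,j)) = x})" by auto
  also have "card \<dots> = (\<Sum>x\<in>S. card {(i,j). i \<in> R \<and> j < k \<and> fst (\<Phi> (i,j)) = x})"
    by (rule card_UN_disjoint) (use assms fin in auto)
  finally show ?thesis by simp
qed

text \<open>Each removed variable that is not far accounts for more than \<open>T/2\<close> positions in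
  dropped clauses, and a dropped clause has only \<open>k\<close> positions.\<close>
lemma removed_near_vars_force_dropped_clauses:
  assumes T: "T = real k ^ 3 * 2 powr (real k / 2)"
    and S: "S \<subseteq> removed_by k r N M \<Phi> t - far_vars k r N M \<Phi> T"
  shows "real (card S) * T / 2 \<le> real k * real (card ({0..<M} - kept_clauses k r N M \<Phi> t))"
proof -
  define R where "R = {0..<M} - kept_clauses k r N M \<Phi> t"
  have finR: "finite R" by (simp add: R_def)
  have finS: "finite S" using S finite_removed_by[of k r N M \<Phi> t] by (auto intro: finite_subset)
  have occ: "T / 2 < real (card {(i,j). i \<in> R \<and> j < k \<and> fst (\<Phi> (i,j)) = x})" if x: "x \<in> S" for x
  proof -
    obtain t' where t': "t' \<le> t" "x \<in> bad_vars k r N \<Phi> (kept_clauses k r N M \<Phi> t')"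
      using removed_by_deviates S x by blast
    show ?thesis unfolding R_def
      using near_deviating_var_occurs_outside[OF T kept_clauses_subset kept_clauses_antimono[OF t'(1)]]
        t'(2) S x removed_by_subset by (auto simp: bad_vars_def)
  qed
  have "real (card S) * (T / 2) \<le> (\<Sum>x\<in>S. real (card {(i,j). i \<in> R \<and> j < k \<and> fst (\<Phi> (i,j)) = x}))"
    using sum_mono[of S "\<lambda>_. T / 2"] occ by (simp add: less_imp_le)
  also have "\<dots> = real (card {(i,j). i \<in> R \<and> j < k \<and> fst (\<Phi> (i,j)) \<in> S})"
    unfolding of_nat_sum[symmetric] card_positions_on_vars[OF finR finS] ..
  also have "\<dots> \<le> real (card (R \<times> {0..<k}))"
    using finR by (intro of_nat_mono card_mono) auto
  finally show ?thesis by (simp add: R_def card_cartesian_product mult.commute)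
qed

lemma near_removed_crossing:
  fixes T :: real
  assumes T: "T = real k ^ 3 * 2 powr (real k / 2)"
    and big: "s + card (far_vars k r N M \<Phi> T) \<le> card (removed_vars k r N M \<Phi>)"
  shows "\<exists>t S. removed_by k r N M \<Phi> t \<subseteq> S \<union> far_vars k r N M \<Phi> T
           \<and> S \<subseteq> removed_by k r N M \<Phi> (Suc t) - far_vars k r N M \<Phi> T \<and> card S = s"
proof -
  define Far where "Far = far_vars k r N M \<Phi> T"
  define A where "A t = removed_by k r N M \<Phi> t - Far" for t
  have "removed_vars k r N M \<Phi> \<subseteq> {0..<N}"
    unfolding removed_vars_eq_UN using removed_by_subset by blast
  hence finRem: "finite (removed_vars k r N M \<Phi>)" by (rule finite_subset) simp
  obtain n where n: "removed_vars k r N M \<Phi> \<subseteq> removed_by k r N M \<Phi> n"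
    using finite_subset_incseq_UN[of _ "removed_by k r N M \<Phi>", OF finRem _ removed_by_Suc]
    by (auto simp: removed_vars_eq_UN)
  have finAF: "finite (A n \<union> Far)"
    unfolding A_def Far_def using finite_removed_by finite_far_vars by blast
  have "removed_by k r N M \<Phi> n \<subseteq> A n \<union> Far" unfolding A_def by blast
  hence "card (removed_by k r N M \<Phi> n) \<le> card (A n \<union> Far)" using finAF by (rule card_mono[rotated])
  also have "\<dots> \<le> card (A n) + card Far" by (rule card_Un_le)
  finally have sA: "s \<le> card (A n)"
    using big card_mono[OF finite_removed_by n] unfolding Far_def by linarith
  have A0: "A 0 = {}" using initially_removed_far[OF T] by (auto simp: A_def Far_def peel_state_0)
  have incA: "A t \<subseteq> A (Suc t)" for t unfolding A_def using removed_by_Suc by blast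
  have finA: "finite (A t)" for t unfolding A_def using finite_removed_by by blast
  obtain t S where "A t \<subseteq> S" "S \<subseteq> A (Suc t)" "card S = s"
    using first_crossing_subset[OF incA finA A0 sA] by blast
  thus ?thesis unfolding A_def Far_def by blast
qed

text \<open>The deterministic core: if many variables are removed, a set of few variables
  (\<open>s\<close> near ones plus all far ones) contains two positions of each of many clauses,
  namely of the clauses dropped up to the crossing round.\<close>
lemma removal_forces_dense_clauses:
  fixes T :: real
  assumes T: "T = real k ^ 3 * 2 powr (real k / 2)"
    and big: "s + card (far_vars k r N M \<Phi> T) \<le> card (removed_vars k r N M \<Phi>)"
  shows "\<exists>S' R. S' \<subseteq> {0..<N} \<and> card S' \<le> s + card (far_vars k r N M \<Phi> T) \<and> R \<subseteq> {0..<M}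
          \<and> real s * T / 2 \<le> real k * real (card R)
          \<and> (\<forall>i\<in>R. 2 \<le> card {j. j < k \<and> fst (\<Phi> (i,j)) \<in> S'})"
proof -
  define Far where "Far = far_vars k r N M \<Phi> T"
  obtain t S where sub: "removed_by k r N M \<Phi> t \<subseteq> S \<union> Far"
    and S: "S \<subseteq> removed_by k r N M \<Phi> (Suc t) - Far" "card S = s"
    using near_removed_crossing[OF T big] unfolding Far_def by blast
  define R where "R = {0..<M} - kept_clauses k r N M \<Phi> (Suc t)"
  have "2 \<le> card {j. j < k \<and> fst (\<Phi> (i,j)) \<in> S \<union> Far}" if "i \<in> R" for i
  proof -
    have "3 \<le> card {j. j < k \<and> fst (\<Phi> (i,j)) \<in> removed_by k r N M \<Phi> t}"
      using dropped_clause_heavy that by (auto simp: R_def)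
    also have "\<dots> \<le> card {j. j < k \<and> fst (\<Phi> (i,j)) \<in> S \<union> Far}"
      using sub by (intro card_mono) auto
    finally show ?thesis by simp
  qed
  moreover have "real s * T / 2 \<le> real k * real (card R)"
    using removed_near_vars_force_dropped_clauses[OF T S(1)[unfolded Far_def]] S(2) by (simp add: R_def)
  moreover have "S \<union> Far \<subseteq> {0..<N}"
    using S(1) removed_by_subset[of k r N M \<Phi> "Suc t"] by (auto simp: Far_def far_vars_def)
  moreover have "card (S \<union> Far) \<le> s + card Far" using card_Un_le[of S Far] S(2) by simp
  ultimately show ?thesis unfolding Far_def R_def by blast
qed

section \<open>The rare events and auxiliary estimates\<close>

definition high_degree_formulas :: "nat \<Rightarrow> nat \<Rightarrow> nat \<Rightarrow> nat \<Rightarrow> real \<Rightarrow> cnf set" where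
  "high_degree_formulas k N M lam c =
     {\<Phi>\<in>formulas k N M. lam \<le> card {l\<in>lits N. real (deg k \<Phi> {0..<M} l) > c}}"

definition low_degree_formulas :: "nat \<Rightarrow> nat \<Rightarrow> nat \<Rightarrow> nat \<Rightarrow> real \<Rightarrow> cnf set" where
  "low_degree_formulas k N M lam c =
     {\<Phi>\<in>formulas k N M. lam \<le> card {l\<in>lits N. real (deg k \<Phi> {0..<M} l) < c}}"

text \<open>Every far variable has a literal of extreme degree.\<close>
lemma card_far_vars_le:
  "card (far_vars k r N M \<Phi> T)
     \<le> card {l\<in>lits N. real (deg k \<Phi> {0..<M} l) > real k * r / 2 + T/2}
       + card {l\<in>lits N. real (deg k \<Phi> {0..<M} l) < real k * r / 2 - T/2}"
proof -
  define Up where "Up = {l\<in>lits N. real (deg k \<Phi> {0..<M} l) > real k * r / 2 + T/2}"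
  define Dn where "Dn = {l\<in>lits N. real (deg k \<Phi> {0..<M} l) < real k * r / 2 - T/2}"
  have fin: "finite (Up \<union> Dn)" by (rule finite_subset[of _ "lits N"]) (auto simp: Up_def Dn_def)
  have "far_vars k r N M \<Phi> T \<subseteq> fst ` (Up \<union> Dn)"
  proof
    fix x assume "x \<in> far_vars k r N M \<Phi> T"
    then obtain b where x: "x < N" "\<bar>real (deg k \<Phi> {0..<M} (x,b)) - real k * r / 2\<bar> > T / 2"
      by (auto simp: far_vars_def)
    hence "(x,b) \<in> Up \<union> Dn" by (auto simp: Up_def Dn_def lits_def abs_if split: if_splits)
    thus "x \<in> fst ` (Up \<union> Dn)" by force
  qed
  hence "card (far_vars k r N M \<Phi> T) \<le> card (fst ` (Up \<union> Dn))"
    using fin by (intro card_mono) auto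
  also have "\<dots> \<le> card (Up \<union> Dn)" by (rule card_image_le[OF fin])
  also have "\<dots> \<le> card Up + card Dn" by (rule card_Un_le)
  finally show ?thesis by (simp add: Up_def Dn_def)
qed

lemma card_far_vars_if_typical:
  assumes "\<Phi> \<in> formulas k N M"
    and "\<Phi> \<notin> high_degree_formulas k N M lam (real k * r / 2 + T / 2)"
    and "\<Phi> \<notin> low_degree_formulas k N M lam (real k * r / 2 - T / 2)"
  shows "real (card (far_vars k r N M \<Phi> T)) \<le> 2 * real lam - 2"
proof -
  have "card (far_vars k r N M \<Phi> T) + 2 \<le> 2 * lam"
    using assms card_far_vars_le[of k r N M \<Phi> T]
    by (auto simp: high_degree_formulas_def low_degree_formulas_def)
  hence "real (card (far_vars k r N M \<Phi> T) + 2) \<le> real (2 * lam)" by (simp only: of_nat_le_iff)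
  thus ?thesis by simp
qed

text \<open>The mean number of positions carrying one of \<open>lam\<close> given literals is
  \<open>\<mu> = kM lam/(2N)\<close>; for \<open>M = \<lceil>rN\<rceil>\<close> it lies between \<open>lam m\<close> and \<open>lam (m + k)\<close>.\<close>
lemma expected_hits_bounds:
  assumes N: "N > 0" and M1: "r * real N \<le> real M" and M2: "real M \<le> r * real N + 1"
  shows "real lam * (real k * r / 2) \<le> real (k*M) * (real lam / real (2*N))"
    and "real (k*M) * (real lam / real (2*N)) \<le> real lam * (real k * r / 2 + real k)"
proof -
  have "real k * (r * real N) \<le> real k * real M" using M1 by (intro mult_left_mono) auto
  hence "real k * r / 2 \<le> real k * real M / (2 * real N)" using N by (simp add: field_simps)
  hence "real lam * (real k * r / 2) \<le> real lam * (real k * real M / (2 * real N))"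
    by (intro mult_left_mono) auto
  thus "real lam * (real k * r / 2) \<le> real (k*M) * (real lam / real (2*N))" by (simp add: mult_ac)
  have "real k * real M \<le> real k * (r * real N + 2 * real N)"
    using M2 N by (intro mult_left_mono) auto
  hence "real k * real M / (2 * real N) \<le> real k * r / 2 + real k" using N by (simp add: field_simps)
  hence "real lam * (real k * real M / (2 * real N)) \<le> real lam * (real k * r / 2 + real k)"
    by (intro mult_left_mono) auto
  thus "real (k*M) * (real lam / real (2*N)) \<le> real lam * (real k * r / 2 + real k)" by (simp add: mult_ac)
qed

lemma binomial_literals_le:
  fixes K :: real
  assumes lam: "lam > 0" and l: "exp (-K) * real N / 4 \<le> real lam"
  shows "real ((2*N) choose lam) \<le> exp (real lam * (ln 8 + 1 + K))"
proof -
  have "real N \<le> 4 * exp K * real lam"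
    using mult_left_mono[OF l, of "exp K"] by (simp add: exp_minus field_simps)
  hence "exp 1 * real (2*N) / real lam \<le> exp 1 * 8 * exp K"
    using lam by (simp add: divide_le_eq mult_ac)
  also have "exp 1 * 8 * exp K = exp (ln 8 + 1 + K)" by (simp add: exp_add)
  finally have "(exp 1 * real (2*N) / real lam) ^ lam \<le> exp (ln 8 + 1 + K) ^ lam"
    by (intro power_mono) auto
  thus ?thesis
    using binomial_le_exp_ratio_pow[OF lam, of "2*N"] by (simp add: exp_of_nat_mult[symmetric])
qed

lemma binomial_vars_le:
  fixes K :: real
  assumes K: "K \<ge> 0" and s0: "exp (-K) * real N \<le> real \<sigma>" and s1: "real \<sigma> \<le> 2 * exp (-K) * real N"
    and \<sigma>: "\<sigma> > 0"
  shows "real (N choose \<sigma>) \<le> exp (2 * exp (-K) * real N * (1 + K))"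
proof -
  have "real N \<le> real \<sigma> * exp K"
    using mult_right_mono[OF s0, of "exp K"] by (simp add: exp_minus field_simps)
  hence "exp 1 * real N / real \<sigma> \<le> exp (1 + K)"
    using \<sigma> by (simp add: exp_add divide_le_eq mult_ac)
  hence "real (N choose \<sigma>) \<le> exp (1 + K) ^ \<sigma>"
    using binomial_le_exp_ratio_pow[OF \<sigma>, of N] power_mono[of _ _ \<sigma>] by (smt (verit) divide_nonneg_nonneg exp_ge_zero of_nat_0_le_iff mult_nonneg_nonneg)
  also have "\<dots> = exp (real \<sigma> * (1 + K))" by (simp add: exp_of_nat_mult[symmetric])
  also have "\<dots> \<le> exp (2 * exp (-K) * real N * (1 + K))"
    using s1 K by (simp add: mult_right_mono)
  finally show ?thesis .
qed

lemma real_nat_ceiling_bounds: "0 \<le> x \<Longrightarrow> x \<le> real (nat \<lceil>x\<rceil>) \<and> real (nat \<lceil>x\<rceil>) < x + 1"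
  by linarith

lemma prob_ge_of_three_rare_events:
  assumes F: "finite F" "F \<noteq> {}" and cover: "F - G \<subseteq> E1 \<union> E2 \<union> E3"
    and E: "E1 \<subseteq> F" "E2 \<subseteq> F" "E3 \<subseteq> F"
    and b: "real (card E1) \<le> real (card F) * b" "real (card E2) \<le> real (card F) * b"
           "real (card E3) \<le> real (card F) * b"
  shows "1 - 3 * b \<le> measure_pmf.prob (pmf_of_set F) G"
proof -
  have fin: "finite E1" "finite E2" "finite E3" using E F by (auto intro: finite_subset)
  have "F = (F \<inter> G) \<union> (F - G)" by blast
  hence "card F \<le> card (F \<inter> G) + card (F - G)" by (metis card_Un_le)
  also have "card (F - G) \<le> card (E1 \<union> E2 \<union> E3)" using cover fin by (intro card_mono) auto
  also have "\<dots> \<le> card E1 + card E2 + card E3" by (meson card_Un_le add_right_mono le_trans)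
  finally have "real (card F) * (1 - 3 * b) \<le> real (card (F \<inter> G))"
    using b by (simp add: algebra_simps)
  moreover have "real (card F) > 0" using F by (simp add: card_gt_0_iff)
  ultimately have "1 - 3 * b \<le> real (card (F \<inter> G)) / real (card F)"
    by (simp add: field_simps)
  thus ?thesis using measure_pmf_of_set[OF F(2,1), of G] by (simp add: Int_commute)
qed

section \<open>The estimate for a fixed large \<open>k\<close>\<close>

text \<open>The numerical hypotheses used for a fixed \<open>k\<close>: \<open>T\<close> is the deviation threshold of
  PR1--PR2, \<open>e^-K\<close> the target fraction of removed variables, \<open>h\<close> the exponential
  parameter of the Chernoff bounds and \<open>e^-\<beta>\<close> the cost of one clause in the dense event.\<close>
locale fixed_k =
  fixes k :: nat and r T K h \<beta> :: real
  assumes T_def: "T = real k ^ 3 * 2 powr (real k / 2)"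
    and k_pos: "k \<ge> 1" and r_ge_1: "r \<ge> 1" and K_nonneg: "K \<ge> 0"
    and h_def: "h = T / (4 * (real k * r / 2 + real k))"
    and h_le_1: "h \<le> 1" and k_le_T: "real k \<le> T / 8"
    and tail_gain: "ln 8 + 2 + K \<le> h * T / 8"
    and dense_base: "64 * exp 1 * r * real k ^ 3 * exp (-K) / T \<le> exp (-\<beta>)"
    and beta_nonneg: "\<beta> \<ge> 0" and dense_gain: "3 + 2 * K \<le> \<beta> * T / (8 * real k)"
begin

abbreviation \<delta> :: real where "\<delta> \<equiv> exp (- K)"

lemma T_pos: "T > 0"
  using T_def k_pos by simp

lemma h_nonneg: "h \<ge> 0" and h_tuned: "(real k * r / 2 + real k) * h = T / 4"
proof -
  have pos: "real k * r / 2 + real k > 0" using k_pos r_ge_1 by (simp add: add_pos_pos)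
  have "0 < 4 * (real k * r / 2 + real k)" by (rule mult_pos_pos[OF _ pos]) simp
  thus "h \<ge> 0" unfolding h_def using T_pos divide_nonneg_pos by (metis less_imp_le)
  have cancel: "x * (T / (4 * x)) = T / 4" if "x \<noteq> 0" for x :: real using that by simp
  show "(real k * r / 2 + real k) * h = T / 4" unfolding h_def by (rule cancel) (use pos in simp)
qed

text \<open>The entropy of choosing the \<open>lam\<close> literals is beaten by the Chernoff exponent.\<close>
lemma binomial_chernoff_tradeoff:
  assumes N: "N > 0" and lam: "lam > 0" "\<delta> * real N / 4 \<le> real lam"
    and x: "x \<le> -(real lam * h * T / 8)" and F: "F \<ge> 0"
  shows "real ((2*N) choose lam) * (F * exp x) \<le> F * exp (- real lam)"
proof -
  have "real ((2*N) choose lam) * (F * exp x) \<le> exp (real lam * (ln 8 + 1 + K)) * (F * exp (-(real lam * h * T / 8)))"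
    using binomial_literals_le[OF lam] x F by (intro mult_mono mult_left_mono) auto
  also have "\<dots> = F * exp (real lam * (ln 8 + 1 + K) - real lam * h * T / 8)"
    by (simp only: diff_conv_add_uminus exp_add) simp
  also have "\<dots> \<le> F * exp (- real lam)"
    using mult_left_mono[OF tail_gain, of "real lam"] F by (intro mult_left_mono) (auto simp: algebra_simps)
  finally show ?thesis .
qed

lemma card_high_degree_formulas:
  assumes N: "N > 0" and M: "r * real N \<le> real M" "real M \<le> r * real N + 1"
    and lam: "lam > 0" "\<delta> * real N / 4 \<le> real lam"
  shows "real (card (high_degree_formulas k N M lam (real k * r / 2 + T / 2)))
           \<le> real (card (formulas k N M)) * exp (- real lam)"
proof -
  have exponent: "real (k*M) * (real lam / real (2*N)) * (exp h - 1) - h * (real lam * (real k * r / 2 + T / 2))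
      \<le> -(real lam * h * T / 8)" (is "?e \<le> _")
    by (rule chernoff_exponent_upper_tail[where k = "real k"])
      (use expected_hits_bounds[OF N M] h_nonneg h_le_1 h_tuned k_le_T r_ge_1 in auto)
  have "real (card (high_degree_formulas k N M lam (real k * r / 2 + T / 2)))
      \<le> real ((2*N) choose lam) * (real (card (formulas k N M)) * exp ?e)"
    unfolding high_degree_formulas_def by (rule card_many_high_degree[OF N h_nonneg])
  also have "\<dots> \<le> real (card (formulas k N M)) * exp (- real lam)"
    by (rule binomial_chernoff_tradeoff[OF N lam exponent]) simp
  finally show ?thesis .
qed

lemma card_low_degree_formulas:
  assumes N: "N > 0" and M: "r * real N \<le> real M" "real M \<le> r * real N + 1"
    and lam: "lam > 0" "\<delta> * real N / 4 \<le> real lam"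
  shows "real (card (low_degree_formulas k N M lam (real k * r / 2 - T / 2)))
           \<le> real (card (formulas k N M)) * exp (- real lam)"
proof -
  have exponent: "real (k*M) * (real lam / real (2*N)) * (exp (-h) - 1) - (-h) * (real lam * (real k * r / 2 - T / 2))
      \<le> -(real lam * h * T / 8)" (is "?e \<le> _")
    by (rule chernoff_exponent_lower_tail[where k = "real k"])
      (use expected_hits_bounds[OF N M] h_nonneg h_le_1 h_tuned r_ge_1 in auto)
  have "real (card (low_degree_formulas k N M lam (real k * r / 2 - T / 2)))
      \<le> real ((2*N) choose lam) * (real (card (formulas k N M)) * exp ?e)"
    unfolding low_degree_formulas_def by (rule card_many_low_degree[OF N]) (use h_nonneg in simp)
  also have "\<dots> \<le> real (card (formulas k N M)) * exp (- real lam)"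
    by (rule binomial_chernoff_tradeoff[OF N lam exponent]) simp
  finally show ?thesis .
qed

lemma dense_clause_choices_le:
  assumes N: "N > 0" and M: "real M \<le> 2 * r * real N"
    and s1: "real \<sigma> \<le> 2 * \<delta> * real N" and rho: "\<delta> * real N * T / (8 * real k) \<le> real \<rho>"
  shows "real (M choose \<rho>) * (real (k*k) ^ \<rho> * (real \<sigma> / real N) ^ (2*\<rho>))
           \<le> exp (- (\<beta> * (\<delta> * real N * T / (8 * real k))))"
proof -
  have Np: "real N > 0" and kp: "real k > 0" using N k_pos by auto
  have rp: "0 < \<delta> * real N * T / (8 * real k)" using Np T_pos kp by simp
  hence rhop: "\<rho> > 0" using rho by linarith
  have a: "exp 1 * real M / real \<rho> \<le> exp 1 * (2 * r * real N) / (\<delta> * real N * T / (8 * real k))"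
    by (rule frac_le) (use M rho rp r_ge_1 in auto)
  have b: "(real \<sigma> / real N)^2 \<le> (2 * \<delta>)^2"
    using s1 Np by (intro power_mono) (auto simp: field_simps)
  have "exp 1 * real M / real \<rho> * (real (k*k) * (real \<sigma> / real N)^2)
      \<le> exp 1 * (2 * r * real N) / (\<delta> * real N * T / (8 * real k)) * (real (k*k) * (2 * \<delta>)^2)"
    using a b T_pos r_ge_1 by (intro mult_mono mult_left_mono) auto
  also have "\<dots> = 64 * exp 1 * r * real k ^ 3 * \<delta> / T"
    using Np kp T_pos by (simp add: power2_eq_square power3_eq_cube field_simps)
  also have "\<dots> \<le> exp (-\<beta>)" by (rule dense_base)
  finally have base: "exp 1 * real M / real \<rho> * (real (k*k) * (real \<sigma> / real N)^2) \<le> exp (-\<beta>)" .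
  have "real (M choose \<rho>) * (real (k*k) ^ \<rho> * (real \<sigma> / real N) ^ (2*\<rho>))
      \<le> (exp 1 * real M / real \<rho>) ^ \<rho> * (real (k*k) ^ \<rho> * ((real \<sigma> / real N)^2) ^ \<rho>)"
    by (simp only: power_mult) (intro mult_right_mono binomial_le_exp_ratio_pow rhop; simp)
  also have "\<dots> = (exp 1 * real M / real \<rho> * (real (k*k) * (real \<sigma> / real N)^2)) ^ \<rho>"
    by (simp only: power_mult_distrib)
  also have "\<dots> \<le> exp (-\<beta>) ^ \<rho>" by (intro power_mono base) simp
  also have "\<dots> = exp (- (\<beta> * real \<rho>))" by (simp add: exp_of_nat_mult[symmetric] mult.commute)
  also have "\<dots> \<le> exp (- (\<beta> * (\<delta> * real N * T / (8 * real k))))"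
    using mult_left_mono[OF rho beta_nonneg] by simp
  finally show ?thesis .
qed

lemma card_dense_formulas_le:
  assumes N: "N > 0" and M: "real M \<le> 2 * r * real N"
    and s0: "\<delta> * real N \<le> real \<sigma>" and s1: "real \<sigma> \<le> 2 * \<delta> * real N"
    and rho: "\<delta> * real N * T / (8 * real k) \<le> real \<rho>"
  shows "real (card (dense_formulas k N M \<sigma> \<rho>)) \<le> real (card (formulas k N M)) * exp (- (\<delta> * real N))"
proof -
  define F where "F = real (card (formulas k N M))"
  have \<sigma>: "\<sigma> > 0" using s0 N by (smt (verit) exp_gt_zero mult_pos_pos of_nat_0_less_iff of_nat_0)
  have "real (card (dense_formulas k N M \<sigma> \<rho>))
      \<le> F * (real (N choose \<sigma>) * (real (M choose \<rho>) * (real (k*k) ^ \<rho> * (real \<sigma> / real N) ^ (2*\<rho>))))"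
    using card_dense_formulas[OF N, of k M \<sigma> \<rho>] by (simp add: F_def mult_ac)
  also have "\<dots> \<le> F * (exp (2 * \<delta> * real N * (1 + K)) * exp (- (\<beta> * (\<delta> * real N * T / (8 * real k)))))"
    using binomial_vars_le[OF K_nonneg s0 s1 \<sigma>] dense_clause_choices_le[OF N M s1 rho]
    by (intro mult_left_mono mult_mono) (auto simp: F_def)
  also have "\<dots> = F * exp ((\<delta> * real N) * (2 + 2 * K - \<beta> * T / (8 * real k)))"
    by (simp add: exp_add[symmetric] algebra_simps)
  also have "\<dots> \<le> F * exp (- (\<delta> * real N))"
  proof -
    have "(\<delta> * real N) * (3 + 2 * K) \<le> (\<delta> * real N) * (\<beta> * T / (8 * real k))"
      using dense_gain by (intro mult_left_mono) auto
    hence "(\<delta> * real N) * (2 + 2 * K - \<beta> * T / (8 * real k)) \<le> - (\<delta> * real N)"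
      by (simp add: algebra_simps)
    thus ?thesis by (intro mult_left_mono) (auto simp: F_def)
  qed
  finally show ?thesis by (simp add: F_def)
qed

lemma many_removed_imp_rare_event:
  assumes \<Phi>: "\<Phi> \<in> formulas k N M"
    and big: "\<delta> * real N < real (card (removed_vars k r N M \<Phi>))"
    and lam: "2 * real lam - 2 < \<delta> * real N / 2"
    and s: "real s \<le> \<delta> * real N / 2" "\<delta> * real N / 4 \<le> real s"
    and \<sigma>: "\<delta> * real N \<le> real \<sigma>" "\<sigma> \<le> N"
    and \<rho>: "\<rho> = nat \<lceil>\<delta> * real N * T / (8 * real k)\<rceil>"
  shows "\<Phi> \<in> high_degree_formulas k N M lam (real k * r / 2 + T / 2)
           \<union> low_degree_formulas k N M lam (real k * r / 2 - T / 2) \<union> dense_formulas k N M \<sigma> \<rho>"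
proof (rule ccontr)
  assume typical: "\<not> ?thesis"
  hence far: "real (card (far_vars k r N M \<Phi> T)) \<le> 2 * real lam - 2"
    using card_far_vars_if_typical[OF \<Phi>] by blast
  hence "real (s + card (far_vars k r N M \<Phi> T)) \<le> real (card (removed_vars k r N M \<Phi>))"
    using s lam big by simp
  hence enough: "s + card (far_vars k r N M \<Phi> T) \<le> card (removed_vars k r N M \<Phi>)"
    by (simp only: of_nat_le_iff)
  obtain S R where S: "S \<subseteq> {0..<N}" "card S \<le> s + card (far_vars k r N M \<Phi> T)"
    and R: "R \<subseteq> {0..<M}" "real s * T / 2 \<le> real k * real (card R)"
    and two: "\<forall>i\<in>R. 2 \<le> card {j. j < k \<and> fst (\<Phi> (i,j)) \<in> S}"
    using removal_forces_dense_clauses[OF T_def enough] by blast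
  have "real (card S) \<le> real \<sigma>" using S(2) far s lam \<sigma> by linarith
  moreover have "(\<delta> * real N) * T \<le> (4 * real s) * T" by (rule mult_right_mono) (use s(2) T_pos in auto)
  hence "\<delta> * real N * T \<le> 8 * real k * real (card R)" using R(2) by linarith
  hence "\<delta> * real N * T / (8 * real k) \<le> real (card R)" using k_pos by (simp add: field_simps)
  hence "\<rho> \<le> card R" by (simp add: \<rho> nat_le_iff ceiling_le_iff)
  ultimately have "\<Phi> \<in> dense_formulas k N M \<sigma> \<rho>"
    using dense_formulasI[OF \<Phi> S(1) _ \<sigma>(2) R(1) _ two] by simp
  thus False using typical by blast
qed

lemma prob_few_removed:
  assumes N: "N > 0" and dN: "4 \<le> \<delta> * real N"
  shows "1 - 3 * exp (- (\<delta> * real N / 4)) \<le> measure_pmf.prob (random_formula k N (nat \<lceil>r * real N\<rceil>))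
           {\<Phi>. real (card (removed_vars k r N (nat \<lceil>r * real N\<rceil>) \<Phi>)) \<le> \<delta> * real N}"
proof -
  define M where "M = nat \<lceil>r * real N\<rceil>"
  define lam where "lam = nat \<lceil>\<delta> * real N / 4\<rceil>"
  define s where "s = nat \<lfloor>\<delta> * real N / 2\<rfloor>"
  define \<sigma> where "\<sigma> = nat \<lceil>\<delta> * real N\<rceil>"
  define \<rho> where "\<rho> = nat \<lceil>\<delta> * real N * T / (8 * real k)\<rceil>"
  have Np: "real N > 0" using N by simp
  have M: "r * real N \<le> real M" "real M \<le> r * real N + 1" "real M \<le> 2 * r * real N"
    using real_nat_ceiling_bounds[of "r * real N"] r_ge_1 Np mult_mono[of 1 r 1 "real N"]
    unfolding M_def by auto
  have lam: "\<delta> * real N / 4 \<le> real lam" "2 * real lam - 2 < \<delta> * real N / 2" "lam > 0"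
    using real_nat_ceiling_bounds[of "\<delta> * real N / 4"] dN unfolding lam_def by auto
  have s: "real s \<le> \<delta> * real N / 2" "\<delta> * real N / 4 \<le> real s"
    using dN unfolding s_def by linarith+
  have \<sigma>: "\<delta> * real N \<le> real \<sigma>" "real \<sigma> \<le> 2 * \<delta> * real N" "\<sigma> \<le> N"
    using real_nat_ceiling_bounds[of "\<delta> * real N"] dN K_nonneg mult_right_mono[of \<delta> 1 "real N"]
    unfolding \<sigma>_def by (auto simp: nat_le_iff ceiling_le_iff)
  have \<rho>: "\<delta> * real N * T / (8 * real k) \<le> real \<rho>"
    using real_nat_ceiling_bounds[of "\<delta> * real N * T / (8 * real k)"] T_pos unfolding \<rho>_def by auto
  have b: "exp (- real lam) \<le> exp (- (\<delta> * real N / 4))" "exp (- (\<delta> * real N)) \<le> exp (- (\<delta> * real N / 4))"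
    using lam Np by auto
  show ?thesis unfolding random_formula_def M_def[symmetric]
  proof (rule prob_ge_of_three_rare_events)
    show "formulas k N M - {\<Phi>. real (card (removed_vars k r N M \<Phi>)) \<le> \<delta> * real N}
      \<subseteq> high_degree_formulas k N M lam (real k * r / 2 + T / 2)
        \<union> low_degree_formulas k N M lam (real k * r / 2 - T / 2) \<union> dense_formulas k N M \<sigma> \<rho>"
      using many_removed_imp_rare_event[OF _ _ lam(2) s \<sigma>(1,3) \<rho>_def] by force
    show "real (card (high_degree_formulas k N M lam (real k * r / 2 + T / 2)))
        \<le> real (card (formulas k N M)) * exp (- (\<delta> * real N / 4))"
      using card_high_degree_formulas[OF N M(1,2) lam(3,1)] b(1) by (smt (verit) mult_left_mono of_nat_0_le_iff)
    show "real (card (low_degree_formulas k N M lam (real k * r / 2 - T / 2)))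
        \<le> real (card (formulas k N M)) * exp (- (\<delta> * real N / 4))"
      using card_low_degree_formulas[OF N M(1,2) lam(3,1)] b(1) by (smt (verit) mult_left_mono of_nat_0_le_iff)
    show "real (card (dense_formulas k N M \<sigma> \<rho>)) \<le> real (card (formulas k N M)) * exp (- (\<delta> * real N / 4))"
      using card_dense_formulas_le[OF N M(3) \<sigma>(1,2) \<rho>] b(2) by (smt (verit) mult_left_mono of_nat_0_le_iff)
    have "card (formulas k N M) > 0" using N by (simp add: card_formulas)
    thus "formulas k N M \<noteq> {}" by auto
  qed (auto simp: high_degree_formulas_def low_degree_formulas_def dense_formulas_def)
qed

lemma one_minus_exp_linear_tendsto: "d > 0 \<Longrightarrow> (\<lambda>N::nat. 1 - 3 * exp (- (d * real N / 4))) \<longlonglongrightarrow> 1"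
  by real_asymp

lemma prob_few_removed_tendsto:
  "(\<lambda>N. measure_pmf.prob (random_formula k N (nat \<lceil>r * real N\<rceil>))
      {\<Phi>. real (card (removed_vars k r N (nat \<lceil>r * real N\<rceil>) \<Phi>)) \<le> \<delta> * real N}) \<longlonglongrightarrow> 1"
proof (rule tendsto_sandwich[OF _ _ one_minus_exp_linear_tendsto tendsto_const])
  have "eventually (\<lambda>N. 4 / \<delta> + 1 \<le> real N) sequentially"
    using eventually_ge_at_top[of "nat \<lceil>4 / \<delta> + 1\<rceil>"] by eventually_elim linarith
  thus "eventually (\<lambda>N. 1 - 3 * exp (- (\<delta> * real N / 4)) \<le> measure_pmf.prob (random_formula k N (nat \<lceil>r * real N\<rceil>))
      {\<Phi>. real (card (removed_vars k r N (nat \<lceil>r * real N\<rceil>) \<Phi>)) \<le> \<delta> * real N}) sequentially"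
  proof eventually_elim
    case (elim N)
    have "0 \<le> 4 / \<delta>" by simp
    hence "N > 0" using elim by linarith
    have "\<delta> * (4 / \<delta> + 1) \<le> \<delta> * real N" by (rule mult_left_mono) (use elim in auto)
    moreover have "\<delta> * (4 / \<delta> + 1) = 4 + \<delta>" by (simp add: distrib_left)
    ultimately have "4 \<le> \<delta> * real N" using exp_gt_zero[of "- K"] by linarith
    with \<open>N > 0\<close> show ?case by (rule prob_few_removed)
  qed
qed (auto simp: measure_pmf.prob_le_1)

end

section \<open>Large \<open>k\<close>\<close>

lemma fixed_kI:
  fixes k :: nat and r :: real
  defines "T \<equiv> real k ^ 3 * 2 powr (real k / 2)"
  assumes k: "k \<ge> 1" and k12: "(2::real) ^ k \<ge> 12"
    and r1: "2 ^ k / 2 \<le> r" and r2: "r \<le> 2 * 2 ^ k"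
    and P3: "T \<le> real k * 2 ^ k" and P4: "8 * real k \<le> T"
    and P5: "ln 8 + 2 + real k ^ 3 \<le> T^2 / (64 * real k * 2 ^ k)"
    and P6: "128 * exp 1 * 2 ^ k * real k ^ 3 * exp (- (real k ^ 3)) / T \<le> exp (- (real k ^ 3 - real k - 6))"
    and P7: "0 \<le> real k ^ 3 - real k - 6"
    and P8: "3 + 2 * real k ^ 3 \<le> (real k ^ 3 - real k - 6) * T / (8 * real k)"
  shows "fixed_k k r T (real k ^ 3) (T / (4 * (real k * r / 2 + real k))) (real k ^ 3 - real k - 6)"
proof
  define m where "m = real k * r / 2"
  have kp: "real k > 0" using k by simp
  have T0: "T > 0" using k by (simp add: T_def)
  have m1: "real k * 2 ^ k / 4 \<le> m" using mult_left_mono[OF r1, of "real k"] by (simp add: m_def)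
  have m2: "m + real k \<le> 2 * (real k * 2 ^ k)"
    using mult_left_mono[OF r2, of "real k"] mult_left_mono[of 1 "2 ^ k" "real k"] by (simp add: m_def)
  have mk0: "m + real k > 0" using m1 kp by (smt (verit) divide_pos_pos mult_pos_pos zero_less_power)
  show "T = real k ^ 3 * 2 powr (real k / 2)" by (simp add: T_def)
  show "1 \<le> k" "0 \<le> real k ^ 3" "0 \<le> real k ^ 3 - real k - 6" by (use k P7 in auto)
  show "1 \<le> r" using r1 k12 by linarith
  show "T / (4 * (real k * r / 2 + real k)) = T / (4 * (real k * r / 2 + real k))" ..
  show "T / (4 * (real k * r / 2 + real k)) \<le> 1"
    using P3 m1 kp mk0 by (simp add: m_def[symmetric] divide_le_eq)
  show "real k \<le> T / 8" using P4 by simp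
  have "T^2 / (64 * real k * 2 ^ k) \<le> T^2 / (32 * (m + real k))"
    using m2 mk0 by (intro divide_left_mono) auto
  also have "\<dots> = T / (4 * (real k * r / 2 + real k)) * T / 8"
    by (simp add: m_def power2_eq_square)
  finally show "ln 8 + 2 + real k ^ 3 \<le> T / (4 * (real k * r / 2 + real k)) * T / 8" using P5 by linarith
  have "64 * exp 1 * r * real k ^ 3 * exp (- (real k ^ 3)) / T
      \<le> 64 * exp 1 * (2 * 2 ^ k) * real k ^ 3 * exp (- (real k ^ 3)) / T"
    using r2 T0 by (intro divide_right_mono mult_right_mono mult_left_mono) auto
  thus "64 * exp 1 * r * real k ^ 3 * exp (- (real k ^ 3)) / T \<le> exp (- (real k ^ 3 - real k - 6))"
    using P6 by simp
  show "3 + 2 * real k ^ 3 \<le> (real k ^ 3 - real k - 6) * T / (8 * real k)" by (rule P8)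
qed

lemma eventually_fixed_k:
  "eventually (\<lambda>k. \<forall>r. 2 ^ k / 2 \<le> r \<and> r \<le> 2 * 2 ^ k \<longrightarrow>
     fixed_k k r (real k ^ 3 * 2 powr (real k / 2)) (real k ^ 3)
       (real k ^ 3 * 2 powr (real k / 2) / (4 * (real k * r / 2 + real k))) (real k ^ 3 - real k - 6)) at_top"
proof -
  have "eventually (\<lambda>k::nat. k \<ge> 1) at_top" by (rule eventually_ge_at_top)
  moreover have "eventually (\<lambda>k::nat. (2::real) ^ k \<ge> 12) at_top" by real_asymp
  moreover have "eventually (\<lambda>k::nat. real k ^ 3 * 2 powr (real k / 2) \<le> real k * 2^k) at_top" by real_asymp
  moreover have "eventually (\<lambda>k::nat. 8 * real k \<le> real k ^ 3 * 2 powr (real k / 2)) at_top" by real_asymp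
  moreover have "eventually (\<lambda>k::nat. ln 8 + 2 + real k ^ 3
      \<le> (real k ^ 3 * 2 powr (real k / 2))^2 / (64 * real k * 2 ^ k)) at_top" by real_asymp
  moreover have "eventually (\<lambda>k::nat. 128 * exp 1 * 2 ^ k * real k ^ 3 * exp (- (real k ^ 3))
      / (real k ^ 3 * 2 powr (real k / 2)) \<le> exp (- (real k ^ 3 - real k - 6))) at_top" by real_asymp
  moreover have "eventually (\<lambda>k::nat. 0 \<le> real k ^ 3 - real k - 6) at_top" by real_asymp
  moreover have "eventually (\<lambda>k::nat. 3 + 2 * real k ^ 3
      \<le> (real k ^ 3 - real k - 6) * (real k ^ 3 * 2 powr (real k / 2)) / (8 * real k)) at_top" by real_asymp
  ultimately show ?thesis by eventually_elim (blast intro: fixed_kI)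
qed

lemma eventually_density_range:
  "eventually (\<lambda>k::nat. \<forall>e::real. \<bar>e\<bar> \<le> 1 \<longrightarrow>
     2 ^ k / 2 \<le> 2 ^ k * ln 2 - (1 + ln 2) / 2 - e \<and> 2 ^ k * ln 2 - (1 + ln 2) / 2 - e \<le> 2 * 2 ^ k) at_top"
proof -
  have "eventually (\<lambda>k::nat. (2::real) ^ k / 2 \<le> 2 ^ k * (2/3) - 2) at_top" by real_asymp
  thus ?thesis
  proof eventually_elim
    case (elim k)
    have ln2: "(2::real) ^ k * (2/3) \<le> 2 ^ k * ln 2" "(2::real) ^ k * ln 2 \<le> 2 ^ k * 1"
      using ln2_ge_two_thirds ln_2_less_1 by (intro mult_left_mono; simp)+
    have range: "P / 2 \<le> Y - (1 + L) / 2 - e \<and> Y - (1 + L) / 2 - e \<le> 2 * P"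
      if "P / 2 \<le> P * (2/3) - 2" "P * (2/3) \<le> Y" "Y \<le> P * 1" "0 < L" "L < 1" "e \<le> 1" "-1 \<le> e"
      for P Y L e :: real
      using that by (intro conjI; simp add: field_simps)
    show ?case using range[OF elim ln2] ln_2_less_1 by (simp add: abs_le_iff)
  qed
qed

theorem lemmaB3:
  fixes eps :: "nat \<Rightarrow> real"
  assumes "eps \<in> \<Theta>(\<lambda>k. 2 powr (- real k / 3))"
  shows "\<exists>k0. \<forall>k\<ge>k0.
    ((\<lambda>N. measure_pmf.prob
        (random_formula k N (nat \<lceil>(2 ^ k * ln 2 - (1 + ln 2) / 2 - eps k) * real N\<rceil>))
        {\<Phi>. real (card (removed_vars k (2 ^ k * ln 2 - (1 + ln 2) / 2 - eps k) N
                (nat \<lceil>(2 ^ k * ln 2 - (1 + ln 2) / 2 - eps k) * real N\<rceil>) \<Phi>))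
             \<le> exp (- (real k ^ 3)) * real N})
     \<longlonglongrightarrow> 1)"
proof -
  have "eps \<in> O(\<lambda>k. 2 powr (- real k / 3))" using assms by (rule bigthetaD1)
  moreover have "(\<lambda>k::nat. 2 powr (- real k / 3)) \<in> o(\<lambda>_. 1)" by real_asymp
  ultimately have "eps \<in> o(\<lambda>_. 1)" by (rule landau_o.big_small_trans)
  hence "eventually (\<lambda>k. \<bar>eps k\<bar> \<le> 1) at_top"
    using landau_o.smallD[of eps at_top "\<lambda>_. 1" 1] by simp
  with eventually_density_range eventually_fixed_k
  have "eventually (\<lambda>k. (\<lambda>N. measure_pmf.prob
        (random_formula k N (nat \<lceil>(2 ^ k * ln 2 - (1 + ln 2) / 2 - eps k) * real N\<rceil>))
        {\<Phi>. real (card (removed_vars k (2 ^ k * ln 2 - (1 + ln 2) / 2 - eps k) N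
                (nat \<lceil>(2 ^ k * ln 2 - (1 + ln 2) / 2 - eps k) * real N\<rceil>) \<Phi>))
             \<le> exp (- (real k ^ 3)) * real N}) \<longlonglongrightarrow> 1) at_top"
    by eventually_elim (blast intro: fixed_k.prob_few_removed_tendsto)
  thus ?thesis by (auto simp: eventually_at_top_linorder)
qed

end
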